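(* The algebra $\mathcal{S}$ is a quasimodular algebra. More precisely, for every $n\ge1$ and all positive even integers $k_1,\dots,k_n$, $$\langle S_{k_1}S_{k_2}\cdots S_{k_n}\rangle_q=\sum_{\alpha\in\Pi(n)}\prod_{A\in\alpha}D^{|A|-1}G_{k_A-2|A|+2},\qquad k_A:=\sum_{a\in A}k_a .$$
   Context: Partitions $\lambda=(\lambda_1\ge\lambda_2\ge\dots)$, $|\lambda|=\sum\lambda_i$, $\mathscr{P}$ the set of all partitions. For $f:\mathscr{P}\to\mathbb{Q}$, $\langle f\rangle_q=\frac{\sum_\lambda f(\lambda)q^{|\lambda|}}{\sum_\lambda q^{|\lambda|}}\in\mathbb{Q}[[q]]$. For even $k\ge2$, $S_k(\lambda)=-\frac{B_k}{2k}+\sum_i\lambda_i^{k-1}$ ($B_k$ Bernoulli numbers), and $\mathcal{S}$ is the algebra generated by these under the pointwise product, graded by giving $S_{k_1}\cdots S_{k_n}$ weight $\sum k_i$. A quasimodular algebra is a graded space of functions $\mathscr{P}\to\mathbb{Q}$ such that the $q$-bracket of every homogeneous element of weight $k$ is a quasimodular form of weight $k$ for $\mathrm{SL}_2(\mathbb{Z})$. $G_k=-\frac{B_k}{2k}+\sum_{m,r\ge1}m^{k-1}q^{mr}$ ($k\ge2$ even) are Eisenstein series and $D=q\frac{d}{dq}$. $\Pi(n)$ is the set of set partitions of $\{1,\dots,n\}$ (each $\alpha\in\Pi(n)$ is a set of disjoint nonempty blocks $A$ with union $\{1,\dots,n\}$). *)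

theory Defs
  imports "HOL-Library.Multiset" "HOL-Library.Disjoint_Sets"
          "HOL-Computational_Algebra.Formal_Power_Series"
begin

text \<open>Bernoulli numbers (convention B_1 = -1/2; only even indices are used):
  B_0 = 1 and sum_{j<=n} C(n+1,j) B_j = 0 for n >= 1.\<close>
fun bernoulli :: "nat \<Rightarrow> rat" where
  "bernoulli n = (if n = 0 then 1 else
     - (\<Sum>j<n. of_nat ((n + 1) choose j) * bernoulli j) / of_nat (n + 1))"

definition int_partitions :: "nat \<Rightarrow> nat multiset set" where
  "int_partitions m = {M. (\<forall>x\<in>#M. 0 < x) \<and> sum_mset M = m}"

definition qbracket :: "(nat multiset \<Rightarrow> rat) \<Rightarrow> rat fps" where
  "qbracket f =
     Abs_fps (\<lambda>m. \<Sum>M\<in>int_partitions m. f M) /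
     Abs_fps (\<lambda>m. of_nat (card (int_partitions m)))"

definition S_fun :: "nat \<Rightarrow> nat multiset \<Rightarrow> rat" where
  "S_fun k M = - bernoulli k / (2 * of_nat k) +
               of_nat (sum_mset (image_mset (\<lambda>x. x ^ (k - 1)) M))"

definition eisenstein :: "nat \<Rightarrow> rat fps" where
  "eisenstein k = Abs_fps (\<lambda>n. if n = 0 then - bernoulli k / (2 * of_nat k)
                                else of_nat (\<Sum>d | d dvd n. d ^ (k - 1)))"

definition qD :: "rat fps \<Rightarrow> rat fps" where
  "qD f = fps_X * fps_deriv f"

end

theory Submission
  imports Defs
begin

text \<open>
  Let F_I be the numerator of the q-bracket of the product of the S_(k i) over i in I; the empty
  product gives the partition generating function F_{}. With r_m(lambda) the number of parts of
  lambda equal to m, S_k(lambda) = -B_k/(2k) + sum_m r_m(lambda) m^(k-1), and weighting a partition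
  by r_m(lambda) amounts to summing over partitions mu of |lambda| - j m with j >= 1 extra parts m.
  As S_k(mu + j parts m) = S_k(mu) + j m^(k-1), expanding the remaining product according to the
  set B of indices that pick the second summand yields
    F_(insert x J) = sum over B subset J of D^|B| G_(k_x + k_B - 2|B|) * F_(J - B),
  since the sum of j^|B| m^((k_x - 1) + sum_B (k_i - 1)) over m j = t is the t-th coefficient of
  D^|B| G_(k_x + k_B - 2|B|), whose constant term survives only for B = {}. Unfolding this
  recursion along the block containing x gives F_I = F_{} times the sum over set partitions.
\<close>

unbundle fps_syntax

section \<open>Set partitions\<close>

lemma partition_on_insert_block:
  assumes "partition_on (J - B) \<beta>" and "B \<subseteq> J" and "x \<notin> J"
  shows "partition_on (insert x J) (insert (insert x B) \<beta>)"
proof -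
  have "disjnt (insert x B) (\<Union>\<beta>)"
    using partition_onD1[OF assms(1)] assms(3) by (auto simp: disjnt_def)
  moreover have "insert x J - insert x B = J - B"
    using assms(3) by auto
  ultimately show ?thesis
    using assms(1,2) by (auto simp: partition_on_insert)
qed

lemma partition_on_Diff_block:
  assumes "partition_on A \<alpha>" and "C \<in> \<alpha>"
  shows "partition_on (A - C) (\<alpha> - {C})"
proof -
  have "disjnt C (\<Union>(\<alpha> - {C}))"
    using partition_onD2[OF assms(1)] assms(2) by (auto simp: disjoint_def disjnt_def)
  moreover have "insert C (\<alpha> - {C}) = \<alpha>"
    using assms(2) by auto
  ultimately show ?thesis
    using assms partition_on_insert[of C "\<alpha> - {C}" A] by simp
qed

lemma partition_on_block_unique:
  assumes "partition_on A \<alpha>" and "x \<in> A"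
  shows "\<exists>!C. C \<in> \<alpha> \<and> x \<in> C"
  using assms by (auto simp: partition_on_def disjoint_def)

lemma bij_betw_partition_on_insert:
  assumes "x \<notin> J"
  shows "bij_betw (\<lambda>(B, \<beta>). insert (insert x B) \<beta>)
           (SIGMA B:Pow J. {\<beta>. partition_on (J - B) \<beta>}) {\<alpha>. partition_on (insert x J) \<alpha>}"
proof -
  define block where "block \<alpha> = (THE C. C \<in> \<alpha> \<and> x \<in> C)" for \<alpha> :: "'a set set"
  have block: "block \<alpha> \<in> \<alpha>" "x \<in> block \<alpha>" if "partition_on (insert x J) \<alpha>" for \<alpha>
    using theI'[OF partition_on_block_unique[OF that insertI1]] by (auto simp: block_def)
  have block_insert: "block (insert (insert x B) \<beta>) = insert x B" if "partition_on (J - B) \<beta>" for B \<beta>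
    unfolding block_def using partition_onD1[OF that] assms by (intro the_equality) auto
  show ?thesis
  proof (rule bij_betw_byWitness[where f' = "\<lambda>\<alpha>. (block \<alpha> - {x}, \<alpha> - {block \<alpha>})"])
    have "(block (insert (insert x B) \<beta>) - {x}, insert (insert x B) \<beta> - {block (insert (insert x B) \<beta>)}) = (B, \<beta>)"
      if "B \<subseteq> J" "partition_on (J - B) \<beta>" for B \<beta>
    proof -
      have "insert x B \<notin> \<beta>" "x \<notin> B"
        using partition_onD1[OF that(2)] that(1) assms by auto
      then show ?thesis
        using block_insert[OF that(2)] by simp
    qed
    then show "\<forall>p \<in> (SIGMA B:Pow J. {\<beta>. partition_on (J - B) \<beta>}).
            (\<lambda>\<alpha>. (block \<alpha> - {x}, \<alpha> - {block \<alpha>})) ((\<lambda>(B, \<beta>). insert (insert x B) \<beta>) p) = p"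
      by auto
    show "\<forall>\<alpha> \<in> {\<alpha>. partition_on (insert x J) \<alpha>}.
            (\<lambda>(B, \<beta>). insert (insert x B) \<beta>) ((\<lambda>\<alpha>. (block \<alpha> - {x}, \<alpha> - {block \<alpha>})) \<alpha>) = \<alpha>"
      using block by (auto simp: insert_absorb)
    show "(\<lambda>(B, \<beta>). insert (insert x B) \<beta>) ` (SIGMA B:Pow J. {\<beta>. partition_on (J - B) \<beta>})
            \<subseteq> {\<alpha>. partition_on (insert x J) \<alpha>}"
      using partition_on_insert_block assms by auto
    show "(\<lambda>\<alpha>. (block \<alpha> - {x}, \<alpha> - {block \<alpha>})) ` {\<alpha>. partition_on (insert x J) \<alpha>}
            \<subseteq> (SIGMA B:Pow J. {\<beta>. partition_on (J - B) \<beta>})"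
    proof clarsimp
      fix \<alpha> assume \<alpha>: "partition_on (insert x J) \<alpha>"
      have "block \<alpha> \<subseteq> insert x J"
        using partition_onD1[OF \<alpha>] block[OF \<alpha>] by auto
      moreover have "insert x J - block \<alpha> = J - (block \<alpha> - {x})"
        using block[OF \<alpha>] assms by auto
      ultimately show "block \<alpha> - {x} \<subseteq> J \<and> partition_on (J - (block \<alpha> - {x})) (\<alpha> - {block \<alpha>})"
        using partition_on_Diff_block[OF \<alpha> block(1)[OF \<alpha>]] by auto
    qed
  qed
qed

lemma sum_partition_on_insert:
  assumes "finite J" and "x \<notin> J"
  shows "(\<Sum>\<alpha> | partition_on (insert x J) \<alpha>. h \<alpha>) =
         (\<Sum>B\<in>Pow J. \<Sum>\<beta> | partition_on (J - B) \<beta>. h (insert (insert x B) \<beta>))"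
proof -
  have "(\<Sum>B\<in>Pow J. \<Sum>\<beta> | partition_on (J - B) \<beta>. h (insert (insert x B) \<beta>)) =
        (\<Sum>(B, \<beta>) \<in> (SIGMA B:Pow J. {\<beta>. partition_on (J - B) \<beta>}). h (insert (insert x B) \<beta>))"
    using assms(1) by (subst sum.Sigma) (auto intro: finitely_many_partition_on)
  also have "\<dots> = (\<Sum>\<alpha> | partition_on (insert x J) \<alpha>. h \<alpha>)"
    using sum.reindex_bij_betw[OF bij_betw_partition_on_insert[OF assms(2)], of h]
    by (simp add: case_prod_unfold)
  finally show ?thesis ..
qed

lemma prod_insert_partition_block:
  assumes "finite J" and "x \<notin> J" and "partition_on (J - B) \<beta>"
  shows "(\<Prod>A\<in>insert (insert x B) \<beta>. g A) = g (insert x B) * (\<Prod>A\<in>\<beta>. g A)"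
proof -
  have "finite \<beta>"
    using finite_elements[OF _ assms(3)] assms(1) by simp
  moreover have "insert x B \<notin> \<beta>"
    using partition_onD1[OF assms(3)] assms(2) by auto
  ultimately show ?thesis
    by simp
qed

section \<open>Integer partitions\<close>

lemma member_le_sum_mset: "x \<in># M \<Longrightarrow> x \<le> sum_mset (M :: nat multiset)"
  by (induction M) auto

lemma size_le_sum_mset: "\<forall>x\<in>#M. 0 < x \<Longrightarrow> size M \<le> sum_mset (M :: nat multiset)"
  by (induction M) auto

lemma finite_int_partitions: "finite (int_partitions N)"
proof (rule finite_subset)
  show "int_partitions N \<subseteq> (\<Union>s\<le>N. multisets_of_size {1..N} s)"
  proof
    fix M assume "M \<in> int_partitions N"
    then have pos: "\<forall>x\<in>#M. 0 < x" and sum: "sum_mset M = N"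
      by (simp_all add: int_partitions_def)
    have "size M \<le> N"
      using size_le_sum_mset[OF pos] sum by simp
    moreover have "set_mset M \<subseteq> {1..N}"
      using pos sum member_le_sum_mset[of _ M] by (auto simp: Suc_le_eq)
    ultimately show "M \<in> (\<Union>s\<le>N. multisets_of_size {1..N} s)"
      by (auto simp: multisets_of_size_def)
  qed
qed (simp add: finite_multisets_of_size)

lemma int_partitions_0: "int_partitions 0 = {{#}}"
proof -
  have "M = {#}" if "sum_mset M = (0 :: nat)" "\<forall>x\<in>#M. 0 < x" for M
    using that by (cases M) auto
  then show ?thesis
    by (auto simp: int_partitions_def)
qed

lemma sum_mset_eq_sum_count:
  fixes g :: "'b \<Rightarrow> 'a::comm_semiring_1"
  assumes "set_mset M \<subseteq> S" and "finite S"
  shows "(\<Sum>x\<in>#M. g x) = (\<Sum>m\<in>S. of_nat (count M m) * g m)"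
  using assms(1)
proof (induction M)
  case (add x M)
  have "(\<Sum>m\<in>S. of_nat (count (add_mset x M) m) * g m) =
        (\<Sum>m\<in>S. of_nat (count M m) * g m) + (\<Sum>m\<in>S. if x = m then g m else 0)"
    unfolding sum.distrib[symmetric] by (intro sum.cong refl) (simp add: algebra_simps)
  then show ?case
    using add assms(2) by (simp add: add.commute)
qed simp

lemma sum_int_partitions_count:
  fixes f :: "nat multiset \<Rightarrow> 'a::semiring_1"
  assumes "0 < m"
  shows "(\<Sum>M\<in>int_partitions N. of_nat (count M m) * f M) =
         (\<Sum>j=1..N div m. \<Sum>\<mu>\<in>int_partitions (N - j * m). f (\<mu> + replicate_mset j m))"
proof -
  have count_le: "count M m \<le> N div m" if "M \<in> int_partitions N" for M
  proof -
    have "(\<Sum>x\<in>#M. if x = m then m else 0) \<le> (\<Sum>x\<in>#M. x)"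
      by (rule sum_mset_mono) auto
    then have "count M m * m \<le> sum_mset M"
      by (simp add: sum_mset_delta mult.commute)
    then show ?thesis
      using that assms by (simp add: int_partitions_def less_eq_div_iff_mult_less_eq)
  qed
  have "(\<Sum>M\<in>int_partitions N. of_nat (count M m) * f M) =
        (\<Sum>M\<in>int_partitions N. \<Sum>j=1..N div m. if j \<le> count M m then f M else 0)"
  proof (intro sum.cong refl)
    fix M assume "M \<in> int_partitions N"
    then have "(\<Sum>j=1..N div m. if j \<le> count M m then f M else 0) = (\<Sum>j=1..count M m. f M)"
      using count_le by (intro sum.mono_neutral_cong_right) auto
    then show "of_nat (count M m) * f M = (\<Sum>j=1..N div m. if j \<le> count M m then f M else 0)"
      by simp
  qed
  also have "\<dots> = (\<Sum>j=1..N div m. \<Sum>M | M \<in> int_partitions N \<and> j \<le> count M m. f M)"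
    by (subst sum.swap) (simp add: sum.inter_filter[OF finite_int_partitions])
  also have "\<dots> = (\<Sum>j=1..N div m. \<Sum>\<mu>\<in>int_partitions (N - j * m). f (\<mu> + replicate_mset j m))"
  proof (rule sum.cong[OF refl])
    fix j assume j: "j \<in> {1..N div m}"
    show "(\<Sum>M | M \<in> int_partitions N \<and> j \<le> count M m. f M) =
          (\<Sum>\<mu>\<in>int_partitions (N - j * m). f (\<mu> + replicate_mset j m))"
    proof (rule sum.reindex_bij_witness[where j = "\<lambda>M. M - replicate_mset j m"
                                          and i = "\<lambda>\<mu>. \<mu> + replicate_mset j m"])
      fix M assume M: "M \<in> {M. M \<in> int_partitions N \<and> j \<le> count M m}"
      then have sub: "replicate_mset j m \<subseteq># M"
        by (simp add: count_le_replicate_mset_subset_eq)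
      then show "M - replicate_mset j m + replicate_mset j m = M"
        and "f (M - replicate_mset j m + replicate_mset j m) = f M"
        by simp_all
      have "sum_mset (M - replicate_mset j m) + j * m = sum_mset M"
        using sum_mset.union[of "M - replicate_mset j m" "replicate_mset j m"] sub by simp
      then have "sum_mset (M - replicate_mset j m) = N - j * m"
        using M by (simp add: int_partitions_def)
      then show "M - replicate_mset j m \<in> int_partitions (N - j * m)"
        using M by (auto simp: int_partitions_def dest: in_diffD)
    next
      fix \<mu> assume \<mu>: "\<mu> \<in> int_partitions (N - j * m)"
      show "\<mu> + replicate_mset j m - replicate_mset j m = \<mu>"
        by simp
      have "j * m \<le> N"
        using j assms by (simp add: less_eq_div_iff_mult_less_eq)
      with \<mu> show "\<mu> + replicate_mset j m \<in> {M. M \<in> int_partitions N \<and> j \<le> count M m}"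
        using assms by (auto simp: int_partitions_def)
    qed
  qed
  finally show ?thesis .
qed

section \<open>Divisor sums and Eisenstein series\<close>

lemma qD_pow_nth: "(qD ^^ r) f $ t = of_nat t ^ r * f $ t"
  by (induction r) (simp_all add: qD_def)

lemma eisenstein_qD_pow_nth:
  assumes "0 < t" and "1 \<le> w"
  shows "(qD ^^ r) (eisenstein w) $ t =
         (\<Sum>d | d dvd t. of_nat (t div d) ^ r * of_nat d ^ (r + w - 1))"
proof -
  have "(of_nat t :: rat) ^ r * of_nat d ^ (w - 1) = of_nat (t div d) ^ r * of_nat d ^ (r + w - 1)"
    if "d dvd t" for d
  proof -
    have "(of_nat t :: rat) = of_nat (t div d) * of_nat d"
      using that by (metis dvd_div_mult_self of_nat_mult)
    then show ?thesis
      using assms(2) by (simp add: power_mult_distrib power_add[symmetric])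
  qed
  then show ?thesis
    using assms(1) by (simp add: qD_pow_nth eisenstein_def sum_distrib_left)
qed

lemma sum_divisors_reindex:
  fixes h :: "nat \<Rightarrow> nat \<Rightarrow> 'a::comm_monoid_add"
  shows "(\<Sum>t=1..N. \<Sum>d | d dvd t. h d (t div d)) = (\<Sum>m=1..N. \<Sum>j=1..N div m. h m j)"
proof -
  have "(\<Sum>t=1..N. \<Sum>d | d dvd t. h d (t div d)) =
        (\<Sum>(t, d)\<in>(SIGMA t:{1..N}. {d. d dvd t}). h d (t div d))"
    by (subst sum.Sigma) auto
  also have "\<dots> = (\<Sum>(m, j)\<in>(SIGMA m:{1..N}. {1..N div m}). h m j)"
  proof (rule sum.reindex_bij_witness[where j = "\<lambda>(t, d). (d, t div d)" and i = "\<lambda>(m, j). (m * j, m)"])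
    fix p assume "p \<in> (SIGMA m:{1..N}. {1..N div m})"
    then obtain m j where p: "p = (m, j)" "1 \<le> m" "1 \<le> j" "j \<le> N div m"
      by auto
    then have "m * j \<le> N"
      by (simp add: less_eq_div_iff_mult_less_eq mult.commute)
    with p show "(\<lambda>(m, j). (m * j, m)) p \<in> (SIGMA t:{1..N}. {d. d dvd t})"
      and "(\<lambda>(t, d). (d, t div d)) ((\<lambda>(m, j). (m * j, m)) p) = p"
      by auto
  next
    fix p assume "p \<in> (SIGMA t:{1..N}. {d. d dvd t})"
    then obtain t d where p: "p = (t, d)" "1 \<le> t" "t \<le> N" "d dvd t"
      by auto
    then have "0 < d" "d \<le> t"
      by (auto intro: dvd_imp_le dvd_pos_nat)
    with p show "(\<lambda>(t, d). (d, t div d)) p \<in> (SIGMA m:{1..N}. {1..N div m})"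
      by (auto simp: div_le_mono Suc_le_eq)
    from p show "(\<lambda>(m, j). (m * j, m)) ((\<lambda>(t, d). (d, t div d)) p) = p"
      and "(\<lambda>(m, j). h m j) ((\<lambda>(t, d). (d, t div d)) p) = (\<lambda>(t, d). h d (t div d)) p"
      by auto
  qed
  also have "\<dots> = (\<Sum>m=1..N. \<Sum>j=1..N div m. h m j)"
    by (subst sum.Sigma) auto
  finally show ?thesis .
qed

lemma fps_mult_nth_divisor_sum:
  fixes f g :: "'a::comm_semiring_1 fps"
  assumes "\<And>t. 0 < t \<Longrightarrow> f $ t = (\<Sum>d | d dvd t. h d (t div d))"
  shows "(f * g) $ N = f $ 0 * g $ N + (\<Sum>m=1..N. \<Sum>j=1..N div m. h m j * g $ (N - j * m))"
proof -
  have "(f * g) $ N = f $ 0 * g $ N + (\<Sum>t=1..N. f $ t * g $ (N - t))"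
    by (simp add: fps_mult_nth sum.atLeast_Suc_atMost)
  also have "(\<Sum>t=1..N. f $ t * g $ (N - t)) = (\<Sum>t=1..N. \<Sum>d | d dvd t. h d (t div d) * g $ (N - t div d * d))"
    using assms by (intro sum.cong refl) (simp add: sum_distrib_right)
  also have "\<dots> = (\<Sum>m=1..N. \<Sum>j=1..N div m. h m j * g $ (N - j * m))"
    by (rule sum_divisors_reindex)
  finally show ?thesis .
qed

section \<open>Products of the functions S_k\<close>

definition partition_gf :: "(nat multiset \<Rightarrow> 'a::comm_monoid_add) \<Rightarrow> 'a fps" where
  "partition_gf f = Abs_fps (\<lambda>N. \<Sum>M\<in>int_partitions N. f M)"

lemma qbracket_eq_partition_gf: "qbracket f = partition_gf f / partition_gf (\<lambda>_. 1)"
  by (simp add: qbracket_def partition_gf_def)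

lemma partition_gf_one_nonzero: "partition_gf (\<lambda>_. 1 :: 'a::{comm_monoid_add, zero_neq_one}) \<noteq> 0"
proof
  assume "partition_gf (\<lambda>_. 1 :: 'a) = 0"
  then have "partition_gf (\<lambda>_. 1 :: 'a) $ 0 = 0"
    by simp
  then show False
    by (simp add: partition_gf_def int_partitions_0)
qed

definition S_product_gf :: "(nat \<Rightarrow> nat) \<Rightarrow> nat set \<Rightarrow> rat fps" where
  "S_product_gf k I = partition_gf (\<lambda>M. \<Prod>i\<in>I. S_fun (k i) M)"

definition eisenstein_block :: "(nat \<Rightarrow> nat) \<Rightarrow> nat set \<Rightarrow> rat fps" where
  "eisenstein_block k A = (qD ^^ (card A - 1)) (eisenstein ((\<Sum>a\<in>A. k a) + 2 - 2 * card A))"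

lemma S_fun_eq_sum_count:
  assumes "M \<in> int_partitions N"
  shows "S_fun k M = eisenstein k $ 0 + (\<Sum>m=1..N. of_nat (count M m) * of_nat m ^ (k - 1))"
proof -
  have "set_mset M \<subseteq> {1..N}"
    using assms member_le_sum_mset[of _ M] by (auto simp: int_partitions_def Suc_le_eq)
  then have "(\<Sum>x\<in>#M. of_nat x ^ (k - 1)) = (\<Sum>m=1..N. of_nat (count M m) * (of_nat m ^ (k - 1) :: rat))"
    by (rule sum_mset_eq_sum_count) simp
  then show ?thesis
    by (simp add: S_fun_def eisenstein_def multiset.map_comp comp_def)
qed

lemma S_fun_add_replicate: "S_fun k (\<mu> + replicate_mset j m) = of_nat j * of_nat m ^ (k - 1) + S_fun k \<mu>"
  by (simp add: S_fun_def)

lemma prod_S_fun_add_replicate: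
  assumes "finite J"
  shows "(\<Prod>i\<in>J. S_fun (k i) (\<mu> + replicate_mset j m)) =
         (\<Sum>B\<in>Pow J. of_nat j ^ card B * of_nat m ^ (\<Sum>i\<in>B. k i - 1) * (\<Prod>i\<in>J - B. S_fun (k i) \<mu>))"
proof -
  have "(\<Prod>i\<in>J. S_fun (k i) (\<mu> + replicate_mset j m)) =
        (\<Prod>i\<in>J. of_nat j * of_nat m ^ (k i - 1) + S_fun (k i) \<mu>)"
    by (simp add: S_fun_add_replicate)
  also have "\<dots> = (\<Sum>B\<in>Pow J. (\<Prod>i\<in>B. of_nat j * of_nat m ^ (k i - 1)) * (\<Prod>i\<in>J - B. S_fun (k i) \<mu>))"
    by (rule prod_add[OF assms])
  finally show ?thesis
    by (simp add: prod.distrib power_sum)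
qed

lemma sum_int_partitions_count_prod_S_fun:
  assumes "finite J" and "0 < m"
  shows "(\<Sum>M\<in>int_partitions N. of_nat (count M m) * (\<Prod>i\<in>J. S_fun (k i) M)) =
         (\<Sum>j=1..N div m. \<Sum>B\<in>Pow J.
            of_nat j ^ card B * of_nat m ^ (\<Sum>i\<in>B. k i - 1) * S_product_gf k (J - B) $ (N - j * m))"
proof -
  have "(\<Sum>M\<in>int_partitions N. of_nat (count M m) * (\<Prod>i\<in>J. S_fun (k i) M)) =
        (\<Sum>j=1..N div m. \<Sum>\<mu>\<in>int_partitions (N - j * m). \<Prod>i\<in>J. S_fun (k i) (\<mu> + replicate_mset j m))"
    by (rule sum_int_partitions_count[OF assms(2)])
  also have "\<dots> = (\<Sum>j=1..N div m. \<Sum>B\<in>Pow J. \<Sum>\<mu>\<in>int_partitions (N - j * m).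
                    of_nat j ^ card B * of_nat m ^ (\<Sum>i\<in>B. k i - 1) * (\<Prod>i\<in>J - B. S_fun (k i) \<mu>))"
    by (simp add: prod_S_fun_add_replicate[OF assms(1)] sum.swap[of _ "Pow J"])
  finally show ?thesis
    by (simp add: S_product_gf_def partition_gf_def sum_distrib_left)
qed

lemma S_product_gf_insert_nth:
  assumes "finite J" and "x \<notin> J"
  shows "S_product_gf k (insert x J) $ N = eisenstein (k x) $ 0 * S_product_gf k J $ N +
           (\<Sum>B\<in>Pow J. \<Sum>m=1..N. \<Sum>j=1..N div m. of_nat j ^ card B *
              of_nat m ^ ((k x - 1) + (\<Sum>i\<in>B. k i - 1)) * S_product_gf k (J - B) $ (N - j * m))"
proof -
  define P where "P M = (\<Prod>i\<in>J. S_fun (k i) M)" for M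
  have "S_product_gf k (insert x J) $ N = (\<Sum>M\<in>int_partitions N. S_fun (k x) M * P M)"
    using assms by (simp add: S_product_gf_def partition_gf_def P_def)
  also have "\<dots> = eisenstein (k x) $ 0 * S_product_gf k J $ N +
      (\<Sum>m=1..N. of_nat m ^ (k x - 1) * (\<Sum>M\<in>int_partitions N. of_nat (count M m) * P M))"
    by (simp add: S_fun_eq_sum_count S_product_gf_def partition_gf_def P_def algebra_simps
        sum.distrib sum_distrib_left sum_distrib_right sum.swap[of _ "int_partitions N"] cong: sum.cong)
  also have "(\<Sum>m=1..N. of_nat m ^ (k x - 1) * (\<Sum>M\<in>int_partitions N. of_nat (count M m) * P M)) =
      (\<Sum>m=1..N. \<Sum>j=1..N div m. \<Sum>B\<in>Pow J. of_nat j ^ card B *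
         of_nat m ^ ((k x - 1) + (\<Sum>i\<in>B. k i - 1)) * S_product_gf k (J - B) $ (N - j * m))"
    unfolding P_def using assms(1)
    by (simp add: sum_int_partitions_count_prod_S_fun sum_distrib_left power_add mult_ac)
  also have "\<dots> = (\<Sum>B\<in>Pow J. \<Sum>m=1..N. \<Sum>j=1..N div m. of_nat j ^ card B *
         of_nat m ^ ((k x - 1) + (\<Sum>i\<in>B. k i - 1)) * S_product_gf k (J - B) $ (N - j * m))"
    by (subst sum.swap, rule sum.cong[OF refl], rule sum.swap)
  finally show ?thesis .
qed

lemma eisenstein_block_weight:
  assumes "finite A" and "A \<noteq> {}" and "\<forall>i\<in>A. 2 \<le> k i"
  shows "2 \<le> (\<Sum>a\<in>A. k a) + 2 - 2 * card A"
    and "(card A - 1) + ((\<Sum>a\<in>A. k a) + 2 - 2 * card A) - 1 = (\<Sum>i\<in>A. k i - 1)"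
proof -
  have "2 * card A \<le> (\<Sum>a\<in>A. k a)"
    using sum_mono[of A "\<lambda>_. 2" k] assms(3) by simp
  moreover have "(\<Sum>i\<in>A. k i - 1) + card A = (\<Sum>a\<in>A. k a)"
    using assms(1,3) by (induction A rule: finite_induct) auto
  moreover have "0 < card A"
    using assms(1,2) by (simp add: card_gt_0_iff)
  ultimately show "2 \<le> (\<Sum>a\<in>A. k a) + 2 - 2 * card A"
    and "(card A - 1) + ((\<Sum>a\<in>A. k a) + 2 - 2 * card A) - 1 = (\<Sum>i\<in>A. k i - 1)"
    by linarith+
qed

lemma eisenstein_block_insert_nth:
  assumes "finite B" and "x \<notin> B" and "\<forall>i\<in>insert x B. 2 \<le> k i" and "0 < t"
  shows "eisenstein_block k (insert x B) $ t =
         (\<Sum>d | d dvd t. of_nat (t div d) ^ card B * of_nat d ^ ((k x - 1) + (\<Sum>i\<in>B. k i - 1)))"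
  using eisenstein_qD_pow_nth[OF assms(4)] eisenstein_block_weight[of "insert x B" k] assms
  by (simp add: eisenstein_block_def)

lemma eisenstein_block_insert_nth_0:
  assumes "finite B" and "x \<notin> B"
  shows "eisenstein_block k (insert x B) $ 0 = (if B = {} then eisenstein (k x) $ 0 else 0)"
  using assms by (simp add: eisenstein_block_def qD_pow_nth card_gt_0_iff)

lemma S_product_gf_insert:
  assumes "finite J" and "x \<notin> J" and "\<forall>i\<in>insert x J. 2 \<le> k i"
  shows "S_product_gf k (insert x J) = (\<Sum>B\<in>Pow J. eisenstein_block k (insert x B) * S_product_gf k (J - B))"
proof (rule fps_ext)
  fix N
  have "(eisenstein_block k (insert x B) * S_product_gf k (J - B)) $ N =
        (if B = {} then eisenstein (k x) $ 0 * S_product_gf k J $ N else 0) +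
        (\<Sum>m=1..N. \<Sum>j=1..N div m.
           of_nat j ^ card B * of_nat m ^ ((k x - 1) + (\<Sum>i\<in>B. k i - 1)) * S_product_gf k (J - B) $ (N - j * m))"
    if "B \<in> Pow J" for B
  proof -
    have B: "finite B" "x \<notin> B" "\<forall>i\<in>insert x B. 2 \<le> k i"
      using that assms by (auto intro: finite_subset)
    have "(eisenstein_block k (insert x B) * S_product_gf k (J - B)) $ N =
          eisenstein_block k (insert x B) $ 0 * S_product_gf k (J - B) $ N +
          (\<Sum>m=1..N. \<Sum>j=1..N div m.
             of_nat j ^ card B * of_nat m ^ ((k x - 1) + (\<Sum>i\<in>B. k i - 1)) * S_product_gf k (J - B) $ (N - j * m))"
      by (rule fps_mult_nth_divisor_sum) (simp add: eisenstein_block_insert_nth[OF B])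
    then show ?thesis
      by (simp add: eisenstein_block_insert_nth_0 B)
  qed
  then show "S_product_gf k (insert x J) $ N =
             (\<Sum>B\<in>Pow J. eisenstein_block k (insert x B) * S_product_gf k (J - B)) $ N"
    using assms(1,2) by (simp add: fps_sum_nth sum.distrib S_product_gf_insert_nth)
qed

lemma S_product_gf_eq_sum_partition_on:
  assumes "finite I" and "\<forall>i\<in>I. 2 \<le> k i"
  shows "S_product_gf k I =
         partition_gf (\<lambda>_. 1) * (\<Sum>\<alpha> | partition_on I \<alpha>. \<Prod>A\<in>\<alpha>. eisenstein_block k A)"
  using assms
proof (induction I rule: finite_psubset_induct)
  case (psubset I)
  show ?case
  proof (cases "I = {}")
    case True
    then show ?thesis
      by (simp add: partition_on_empty S_product_gf_def)
  next
    case False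
    then obtain x where "x \<in> I"
      by blast
    then obtain J where I: "I = insert x J" and "x \<notin> J"
      by (rule Set.set_insert)
    have "finite J"
      using psubset.hyps I by simp
    have IH: "S_product_gf k (J - B) =
              partition_gf (\<lambda>_. 1) * (\<Sum>\<beta> | partition_on (J - B) \<beta>. \<Prod>A\<in>\<beta>. eisenstein_block k A)"
      if "B \<in> Pow J" for B
      using psubset.IH[of "J - B"] psubset.prems I \<open>x \<notin> J\<close> by auto
    have "S_product_gf k I = (\<Sum>B\<in>Pow J. eisenstein_block k (insert x B) * S_product_gf k (J - B))"
      using S_product_gf_insert \<open>finite J\<close> \<open>x \<notin> J\<close> psubset.prems I by simp
    also have "\<dots> = partition_gf (\<lambda>_. 1) * (\<Sum>B\<in>Pow J. \<Sum>\<beta> | partition_on (J - B) \<beta>.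
                      \<Prod>A\<in>insert (insert x B) \<beta>. eisenstein_block k A)"
      unfolding sum_distrib_left
    proof (rule sum.cong[OF refl])
      fix B assume B: "B \<in> Pow J"
      have "eisenstein_block k (insert x B) * S_product_gf k (J - B) =
            (\<Sum>\<beta> | partition_on (J - B) \<beta>.
               partition_gf (\<lambda>_. 1) * (eisenstein_block k (insert x B) * (\<Prod>A\<in>\<beta>. eisenstein_block k A)))"
        by (simp add: IH[OF B] sum_distrib_left mult_ac)
      then show "eisenstein_block k (insert x B) * S_product_gf k (J - B) =
            (\<Sum>\<beta> | partition_on (J - B) \<beta>.
               partition_gf (\<lambda>_. 1) * (\<Prod>A\<in>insert (insert x B) \<beta>. eisenstein_block k A))"
        by (simp add: prod_insert_partition_block[OF \<open>finite J\<close> \<open>x \<notin> J\<close>])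
    qed
    also have "\<dots> = partition_gf (\<lambda>_. 1) * (\<Sum>\<alpha> | partition_on I \<alpha>. \<Prod>A\<in>\<alpha>. eisenstein_block k A)"
      unfolding I using sum_partition_on_insert[OF \<open>finite J\<close> \<open>x \<notin> J\<close>,
          of "\<lambda>\<alpha>. \<Prod>A\<in>\<alpha>. eisenstein_block k A"] by simp
    finally show ?thesis .
  qed
qed

theorem theorem3p3p1:
  fixes n :: nat and k :: "nat \<Rightarrow> nat"
  assumes "1 \<le> n"
    and "\<forall>i\<in>{1..n}. 0 < k i \<and> even (k i)"
  shows "qbracket (\<lambda>M. \<Prod>i=1..n. S_fun (k i) M) =
         (\<Sum>\<alpha>\<in>{P. partition_on {1..n} P}.
            \<Prod>A\<in>\<alpha>. (qD ^^ (card A - 1)) (eisenstein ((\<Sum>a\<in>A. k a) + 2 - 2 * card A)))"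
proof -
  have "\<forall>i\<in>{1..n}. 2 \<le> k i"
    using assms(2) by (auto elim!: evenE)
  then have "S_product_gf k {1..n} =
             partition_gf (\<lambda>_. 1) * (\<Sum>\<alpha> | partition_on {1..n} \<alpha>. \<Prod>A\<in>\<alpha>. eisenstein_block k A)"
    by (intro S_product_gf_eq_sum_partition_on) simp
  then have "qbracket (\<lambda>M. \<Prod>i=1..n. S_fun (k i) M) =
             (\<Sum>\<alpha> | partition_on {1..n} \<alpha>. \<Prod>A\<in>\<alpha>. eisenstein_block k A)"
    by (simp add: qbracket_eq_partition_gf partition_gf_one_nonzero flip: S_product_gf_def)
  then show ?thesis
    by (simp only: eisenstein_block_def)
qed

end
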